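(* In the three-dimensional Heisenberg setting of the context, let $\gamma=\exp(z_\gamma Z)$ with $z_\gamma\neq0$, let $E>0$, $\ell\in\mathbb Z\setminus\{0\}$ and $z_0\in\mathbb R\setminus\{0\}$. There exist $u_0,v_0$ such that the spiraling magnetic geodesic with $\sigma(0)=e$ and parameters $(u_0,v_0,z_0)$ has energy $E$ and is $\gamma$-periodic with period $\omega=2\pi A\ell/z_0$ if and only if one of the following holds (writing $r=\frac{z_\gamma}{\pi A\ell}$): (1a) $E>|B|$, $1<\frac{2E}{E+B}<r$, and $z_0=-\sqrt{\frac{E^2-B^2}{r-1}}$; (1b) $E>|B|$, $1<\frac{2E}{E-B}<r$, and $z_0=+\sqrt{\frac{E^2-B^2}{r-1}}$; (2a) $0<E<B$, $\frac{2E}{E-|B|}<r<\frac{2E}{E+|B|}<1$, and $z_0=-\sqrt{\frac{E^2-B^2}{r-1}}$; (2b) $B<0$, $0<E<|B|$, $\frac{2E}{E-|B|}<r<\frac{2E}{E+|B|}<1$, and $z_0=+\sqrt{\frac{E^2-B^2}{r-1}}$; (3a) $E=B$, $\ell=\frac{z_\gamma}{\pi A}$, and $-2B<z_0<0$; (3b) $E=-B$, $\ell=\frac{z_\gamma}{\pi A}$, and $0<z_0<-2B$. In all cases the period is $\omega=2\pi A\ell/z_0$, and one may take any $u_0,v_0$ with $u_0^2+v_0^2=A(E^2-(z_0+B)^2)$.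
   Context: Let $\mathfrak h$ be the real Lie algebra with basis $X,Y,Z$ whose only nonzero bracket among basis vectors is $[X,Y]=Z$, and $H$ the simply connected three-dimensional Heisenberg group with Lie algebra $\mathfrak h$; $\exp:\mathfrak h\to H$ is a diffeomorphism with $\exp(U)\exp(V)=\exp(U+V+\tfrac12[U,V])$. Fix $A>0$; $g$ is the left-invariant metric with $\{X/\sqrt A,Y/\sqrt A,Z\}$ orthonormal. With $\{\alpha,\beta,\zeta\}$ the dual basis and $B\in\mathbb R$, the magnetic form is $\Omega=d(B\zeta)=-B\alpha\wedge\beta$; magnetic geodesics solve $\nabla_{\sigma'}\sigma'=F\sigma'$ where $g(Fu,v)=\Omega(u,v)$. The magnetic geodesics with $\sigma(0)=e$ are exactly $\sigma(t)=\exp(x(t)X+y(t)Y+z(t)Z)$ with, for parameters $(u_0,v_0,z_0)\in\mathbb R^3$: if $z_0\ne0$, $x(t)=\frac{u_0}{z_0}\sin(\frac{z_0t}{A})-\frac{v_0}{z_0}(1-\cos(\frac{z_0t}{A}))$, $y(t)=\frac{u_0}{z_0}(1-\cos(\frac{z_0t}{A}))+\frac{v_0}{z_0}\sin(\frac{z_0t}{A})$, $z(t)=(z_0+B+\frac{u_0^2+v_0^2}{2Az_0})t-\frac{u_0^2+v_0^2}{2z_0^2}\sin(\frac{z_0t}{A})$; if $z_0=0$, $x=u_0t/A$, $y=v_0t/A$, $z=Bt$. The energy is $E=|\sigma'|$, with $E^2=(u_0^2+v_0^2)/A+(z_0+B)^2$. Such a geodesic is spiraling if $z_0\neq0$ and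 $(u_0,v_0)\neq(0,0)$. For $\gamma\neq e$, $\sigma$ is $\gamma$-periodic with period $\omega\ne0$ if $\gamma\sigma(t)=\sigma(t+\omega)$ for all $t$; for a spiraling $\gamma$-periodic geodesic with $\gamma$ central, necessarily $\omega z_0=2\pi A\ell$ for some $\ell\in\mathbb Z\setminus\{0\}$. *)

theory Defs
  imports "HOL-Analysis.Analysis"
begin

text \<open>The simply connected 3-dimensional Heisenberg group H, identified with \<real>^3 via
  exponential coordinates: the triple (x,y,z) stands for exp(xX + yY + zZ).  By the
  BCH formula exp(U)exp(V) = exp(U + V + [U,V]/2) with [X,Y] = Z, the group law reads:\<close>

type_synonym heis = "real \<times> real \<times> real"

definition hmul :: "heis \<Rightarrow> heis \<Rightarrow> heis" where
  "hmul p q = (case p of (x, y, z) \<Rightarrow> case q of (x', y', z') \<Rightarrow>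
      (x + x', y + y', z + z' + (x * y' - y * x') / 2))"

definition central_elt :: "real \<Rightarrow> heis" where
  "central_elt z = (0, 0, z)"

text \<open>The magnetic geodesic through e with parameters (u0,v0,z0), for metric
  parameter A and magnetic strength B.\<close>
definition mag_geod :: "real \<Rightarrow> real \<Rightarrow> real \<Rightarrow> real \<Rightarrow> real \<Rightarrow> real \<Rightarrow> heis" where
  "mag_geod A B u0 v0 z0 t =
    (if z0 \<noteq> 0 then
       (u0 / z0 * sin (z0 * t / A) - v0 / z0 * (1 - cos (z0 * t / A)),
        u0 / z0 * (1 - cos (z0 * t / A)) + v0 / z0 * sin (z0 * t / A),
        (z0 + B + (u0\<^sup>2 + v0\<^sup>2) / (2 * A * z0)) * t
          - (u0\<^sup>2 + v0\<^sup>2) / (2 * z0\<^sup>2) * sin (z0 * t / A))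
     else (u0 * t / A, v0 * t / A, B * t))"

text \<open>Energy E = |sigma'| of that geodesic (constant along it).\<close>
definition mag_energy :: "real \<Rightarrow> real \<Rightarrow> real \<Rightarrow> real \<Rightarrow> real \<Rightarrow> real" where
  "mag_energy A B u0 v0 z0 = sqrt ((u0\<^sup>2 + v0\<^sup>2) / A + (z0 + B)\<^sup>2)"

definition spiraling :: "real \<Rightarrow> real \<Rightarrow> real \<Rightarrow> bool" where
  "spiraling u0 v0 z0 \<longleftrightarrow> z0 \<noteq> 0 \<and> (u0, v0) \<noteq> (0, 0)"

definition periodic_with :: "heis \<Rightarrow> (real \<Rightarrow> heis) \<Rightarrow> real \<Rightarrow> bool" where
  "periodic_with \<gamma> \<sigma> \<omega> \<longleftrightarrow> \<omega> \<noteq> 0 \<and> (\<forall>t. hmul \<gamma> (\<sigma> t) = \<sigma> (t + \<omega>))"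

end

theory Submission
  imports Defs
begin

(* Translating by the central element exp(zZ) only shifts the z-coordinate, while after a time
   omega with z0 omega = 2 pi A l the planar part of a spiraling geodesic returns to its start and
   its z-coordinate has grown by the drift c omega, c = z0 + B + (u0^2 + v0^2)/(2 A z0).  So the
   geodesic is gamma-periodic iff c omega = z_gamma.  Eliminating u0^2 + v0^2 through the energy,
   this becomes (r - 1) z0^2 = E^2 - B^2, and spiraling means (z0 + B)^2 < E^2.  The six cases
   are what this pair of conditions says after solving for z0; the reflection (B, z0) -> (-B, -z0)
   preserves both conditions and exchanges the cases z0 < 0 and z0 > 0. *)

lemma hmul_central_elt: "hmul (central_elt c) (x, y, z) = (x, y, z + c)"
  by (simp add: hmul_def central_elt_def)

lemma hmul_central_elt_right_cancel: "hmul (central_elt c) p = hmul (central_elt c') p \<longleftrightarrow> c = c'"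
  by (cases p) (simp add: hmul_central_elt)

definition mag_drift :: "real \<Rightarrow> real \<Rightarrow> real \<Rightarrow> real \<Rightarrow> real \<Rightarrow> real" where
  "mag_drift A B u0 v0 z0 = z0 + B + (u0\<^sup>2 + v0\<^sup>2) / (2 * A * z0)"

lemma mag_geod_add_period:
  fixes l :: int
  assumes "z0 \<noteq> 0" and "z0 * \<omega> / A = 2 * pi * of_int l"
  shows "mag_geod A B u0 v0 z0 (t + \<omega>)
       = hmul (central_elt (mag_drift A B u0 v0 z0 * \<omega>)) (mag_geod A B u0 v0 z0 t)"
proof -
  have "sin (z0 * (t + \<omega>) / A) = sin (z0 * t / A) \<and> cos (z0 * (t + \<omega>) / A) = cos (z0 * t / A)"
    unfolding sin_cos_eq_iff using assms(2) by (intro exI[of _ l]) (simp add: add_divide_distrib distrib_left)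
  then show ?thesis
    using assms(1) by (simp add: mag_geod_def mag_drift_def hmul_central_elt algebra_simps add_divide_distrib)
qed

lemma periodic_with_central_elt_iff:
  fixes l :: int
  assumes "z0 \<noteq> 0" and "\<omega> \<noteq> 0" and "z0 * \<omega> / A = 2 * pi * of_int l"
  shows "periodic_with (central_elt c) (mag_geod A B u0 v0 z0) \<omega> \<longleftrightarrow> mag_drift A B u0 v0 z0 * \<omega> = c"
  using assms by (auto simp: periodic_with_def mag_geod_add_period hmul_central_elt_right_cancel)

lemma mag_energy_eq_iff:
  assumes "A > 0" and "E \<ge> 0"
  shows "mag_energy A B u0 v0 z0 = E \<longleftrightarrow> u0\<^sup>2 + v0\<^sup>2 = A * (E\<^sup>2 - (z0 + B)\<^sup>2)"
proof -
  have "mag_energy A B u0 v0 z0 = E \<longleftrightarrow> (u0\<^sup>2 + v0\<^sup>2) / A + (z0 + B)\<^sup>2 = E\<^sup>2"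
    unfolding mag_energy_def
    using assms by (metis add_nonneg_nonneg divide_nonneg_pos less_imp_le real_sqrt_pow2 real_sqrt_unique zero_le_power2)
  also have "\<dots> \<longleftrightarrow> u0\<^sup>2 + v0\<^sup>2 = A * (E\<^sup>2 - (z0 + B)\<^sup>2)"
    using assms(1) by (auto simp: field_simps)
  finally show ?thesis .
qed

lemma spiraling_iff: "spiraling u0 v0 z0 \<longleftrightarrow> z0 \<noteq> 0 \<and> 0 < u0\<^sup>2 + v0\<^sup>2"
  by (auto simp: spiraling_def sum_power2_gt_zero_iff)

lemma drift_period_eq_iff:
  fixes l :: int
  assumes "A > 0" and "l \<noteq> 0" and "z0 \<noteq> 0" and "u0\<^sup>2 + v0\<^sup>2 = A * (E\<^sup>2 - (z0 + B)\<^sup>2)"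
  shows "mag_drift A B u0 v0 z0 * (2 * pi * A * of_int l / z0) = c
     \<longleftrightarrow> (c / (pi * A * of_int l) - 1) * z0\<^sup>2 = E\<^sup>2 - B\<^sup>2"
proof -
  have pAl: "pi * A * of_int l \<noteq> 0"
    using assms(1,2) by simp
  have "mag_drift A B u0 v0 z0 * (2 * pi * A * of_int l / z0)
      = pi * A * of_int l * (z0\<^sup>2 + E\<^sup>2 - B\<^sup>2) / z0\<^sup>2"
    unfolding mag_drift_def assms(4) using assms(1,3) by (simp add: field_simps power2_eq_square)
  also have "\<dots> = c \<longleftrightarrow> pi * A * of_int l * (z0\<^sup>2 + E\<^sup>2 - B\<^sup>2) = c * z0\<^sup>2"
    using assms(3) by (simp add: divide_eq_eq)
  also have "\<dots> \<longleftrightarrow> (c / (pi * A * of_int l) - 1) * z0\<^sup>2 = E\<^sup>2 - B\<^sup>2"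
    using pAl by (auto simp: field_simps)
  finally show ?thesis .
qed

lemma spiraling_periodic_mag_geod_iff:
  fixes l :: int
  assumes "A > 0" and "E \<ge> 0" and "l \<noteq> 0" and "z0 \<noteq> 0"
  shows "spiraling u0 v0 z0 \<and> mag_energy A B u0 v0 z0 = E
      \<and> periodic_with (central_elt c) (mag_geod A B u0 v0 z0) (2 * pi * A * of_int l / z0)
    \<longleftrightarrow> u0\<^sup>2 + v0\<^sup>2 = A * (E\<^sup>2 - (z0 + B)\<^sup>2) \<and> (z0 + B)\<^sup>2 < E\<^sup>2
      \<and> (c / (pi * A * of_int l) - 1) * z0\<^sup>2 = E\<^sup>2 - B\<^sup>2"
proof (cases "u0\<^sup>2 + v0\<^sup>2 = A * (E\<^sup>2 - (z0 + B)\<^sup>2)")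
  case energy: True
  have "periodic_with (central_elt c) (mag_geod A B u0 v0 z0) (2 * pi * A * of_int l / z0)
      \<longleftrightarrow> mag_drift A B u0 v0 z0 * (2 * pi * A * of_int l / z0) = c"
    using assms by (intro periodic_with_central_elt_iff[where l = l]) auto
  moreover have "0 < u0\<^sup>2 + v0\<^sup>2 \<longleftrightarrow> (z0 + B)\<^sup>2 < E\<^sup>2"
    unfolding energy using assms(1) by (simp add: zero_less_mult_iff)
  ultimately show ?thesis
    using assms energy drift_period_eq_iff[OF assms(1,3,4) energy]
    by (simp add: spiraling_iff mag_energy_eq_iff)
next
  case False
  then show ?thesis
    using assms by (simp add: mag_energy_eq_iff)
qed

lemma neg_eq_minus_sqrt_iff:
  fixes z X :: real
  assumes "z < 0"
  shows "z = - sqrt X \<longleftrightarrow> z\<^sup>2 = X"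
proof
  assume z: "z = - sqrt X"
  then have "0 < X"
    using assms by simp
  then show "z\<^sup>2 = X"
    using z by simp
next
  assume "z\<^sup>2 = X"
  then show "z = - sqrt X"
    using assms by auto
qed

lemma square_eq_divide_iff:
  fixes z D k :: "'a::field"
  assumes "z \<noteq> 0" and "D \<noteq> 0"
  shows "z\<^sup>2 = D / k \<longleftrightarrow> k * z\<^sup>2 = D"
  using assms by (cases "k = 0") (auto simp: field_simps)

lemma abs_less_square_iff:
  fixes x y :: "'a::linordered_idom"
  shows "\<bar>x\<bar> < \<bar>y\<bar> \<longleftrightarrow> x\<^sup>2 < y\<^sup>2"
  using abs_le_square_iff[of y x] by (simp add: not_le[symmetric])

lemma less_mult_iff_less_square:
  fixes k p q w :: "'a::linordered_idom"
  assumes "0 < k" and "0 < p" and "k * w = p * q"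
  shows "q < k * p \<longleftrightarrow> w < p\<^sup>2"
proof -
  have "q < k * p \<longleftrightarrow> p * q < p * (k * p)"
    using assms(2) by simp
  also have "\<dots> \<longleftrightarrow> k * w < k * p\<^sup>2"
    by (simp add: assms(3) power2_eq_square ac_simps)
  also have "\<dots> \<longleftrightarrow> w < p\<^sup>2"
    using assms(1) by simp
  finally show ?thesis .
qed

lemma mult_less_iff_square_less:
  fixes k p q w :: "'a::linordered_idom"
  assumes "0 < k" and "0 < p" and "k * w = p * q"
  shows "k * p < q \<longleftrightarrow> p\<^sup>2 < w"
proof -
  have "k * p < q \<longleftrightarrow> p * (k * p) < p * q"
    using assms(2) by simp
  also have "\<dots> \<longleftrightarrow> k * p\<^sup>2 < k * w"
    by (simp add: assms(3) power2_eq_square ac_simps)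
  also have "\<dots> \<longleftrightarrow> p\<^sup>2 < w"
    using assms(1) by simp
  finally show ?thesis .
qed

(* Cases (1a), (2a) and (3a) of the theorem, with r = 1 in place of l = z_gamma / (pi A). *)
definition neg_branch_conds :: "real \<Rightarrow> real \<Rightarrow> real \<Rightarrow> real \<Rightarrow> bool" where
  "neg_branch_conds E B r z0 \<longleftrightarrow>
      (E > \<bar>B\<bar> \<and> 1 < 2 * E / (E + B) \<and> 2 * E / (E + B) < r \<and> z0 = - sqrt ((E\<^sup>2 - B\<^sup>2) / (r - 1)))
    \<or> (0 < E \<and> E < B \<and> 2 * E / (E - \<bar>B\<bar>) < r \<and> r < 2 * E / (E + \<bar>B\<bar>) \<and> 2 * E / (E + \<bar>B\<bar>) < 1
         \<and> z0 = - sqrt ((E\<^sup>2 - B\<^sup>2) / (r - 1)))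
    \<or> (E = B \<and> r = 1 \<and> - 2 * B < z0 \<and> z0 < 0)"

lemma neg_branch_conds_imp_neg:
  assumes "neg_branch_conds E B r z0"
  shows "z0 < 0"
proof -
  have "0 < (E\<^sup>2 - B\<^sup>2) / (r - 1)" if "E > \<bar>B\<bar>" and "1 < 2 * E / (E + B)" and "2 * E / (E + B) < r"
  proof -
    have "B\<^sup>2 < E\<^sup>2"
      using that(1) abs_less_square_iff[of B E] by simp
    then show ?thesis
      using that(2,3) by simp
  qed
  moreover have "0 < (E\<^sup>2 - B\<^sup>2) / (r - 1)" if "0 < E" and "E < B" and "r < 2 * E / (E + \<bar>B\<bar>)"
    and "2 * E / (E + \<bar>B\<bar>) < 1"
  proof -
    have "E\<^sup>2 < B\<^sup>2"
      using that(1,2) abs_less_square_iff[of E B] by simp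
    then show ?thesis
      using that(3,4) by (simp add: divide_neg_neg)
  qed
  ultimately show ?thesis
    using assms unfolding neg_branch_conds_def by auto
qed

lemma neg_branch_conds_iff_above:
  assumes "E > \<bar>B\<bar>" and "z0 < 0"
  shows "neg_branch_conds E B r z0 \<longleftrightarrow> (z0 + B)\<^sup>2 < E\<^sup>2 \<and> (r - 1) * z0\<^sup>2 = E\<^sup>2 - B\<^sup>2"
proof -
  define a b where "a = E + B" and "b = E - B"
  have a: "a > 0" and b: "b > 0" and D: "E\<^sup>2 - B\<^sup>2 = a * b"
    using assms(1) by (auto simp: a_def b_def algebra_simps power2_eq_square)
  have "1 < 2 * E / a"
    using a b by (simp add: a_def b_def field_simps)
  moreover have "E \<noteq> B"
    using assms(1) by auto
  ultimately have "neg_branch_conds E B r z0 \<longleftrightarrow> 2 * E / a < r \<and> (r - 1) * z0\<^sup>2 = a * b"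
    using assms a b unfolding neg_branch_conds_def D a_def[symmetric]
    by (simp add: neg_eq_minus_sqrt_iff square_eq_divide_iff)
  also have "\<dots> \<longleftrightarrow> - a < z0 \<and> (r - 1) * z0\<^sup>2 = a * b"
  proof (cases "(r - 1) * z0\<^sup>2 = a * b")
    case True
    then have "0 < (r - 1) * z0\<^sup>2"
      using a b by simp
    then have "r - 1 > 0"
      using assms(2) by (simp add: zero_less_mult_iff)
    have "2 * E / a < r \<longleftrightarrow> b < (r - 1) * a"
      using a by (simp add: a_def b_def field_simps)
    also have "\<dots> \<longleftrightarrow> z0\<^sup>2 < a\<^sup>2"
      by (rule less_mult_iff_less_square[OF \<open>r - 1 > 0\<close> a True])
    also have "\<dots> \<longleftrightarrow> - a < z0"
      using abs_less_square_iff[of z0 a] a assms(2) by auto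
    finally show ?thesis
      using True by simp
  qed simp
  also have "\<dots> \<longleftrightarrow> (z0 + B)\<^sup>2 < E\<^sup>2 \<and> (r - 1) * z0\<^sup>2 = E\<^sup>2 - B\<^sup>2"
    using abs_less_square_iff[of "z0 + B" E] assms b by (auto simp: D a_def b_def)
  finally show ?thesis .
qed

lemma neg_branch_conds_iff_below:
  assumes "0 < E" and "E < B" and "z0 < 0"
  shows "neg_branch_conds E B r z0 \<longleftrightarrow> (z0 + B)\<^sup>2 < E\<^sup>2 \<and> (r - 1) * z0\<^sup>2 = E\<^sup>2 - B\<^sup>2"
proof -
  define a c where "a = E + B" and "c = B - E"
  have a: "a > 0" and c: "c > 0" and D: "E\<^sup>2 - B\<^sup>2 = - (a * c)"
    using assms(1,2) by (auto simp: a_def c_def algebra_simps power2_eq_square)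
  have "2 * E / a < 1"
    using assms(1,2) a by (simp add: a_def field_simps)
  moreover have "E - \<bar>B\<bar> = - c" and "E + \<bar>B\<bar> = a" and "\<not> E > \<bar>B\<bar>" and "E \<noteq> B"
    using assms(1,2) by (auto simp: a_def c_def)
  moreover have "(E\<^sup>2 - B\<^sup>2) / (r - 1) = a * c / (1 - r)"
    unfolding D by (cases "r = 1") (simp_all add: field_simps)
  moreover have "z0\<^sup>2 = a * c / (1 - r) \<longleftrightarrow> (1 - r) * z0\<^sup>2 = a * c"
    using assms(3) a c by (intro square_eq_divide_iff) auto
  ultimately have "neg_branch_conds E B r z0
      \<longleftrightarrow> - (2 * E) / c < r \<and> r < 2 * E / a \<and> (1 - r) * z0\<^sup>2 = a * c"
    using assms unfolding neg_branch_conds_def by (simp add: neg_eq_minus_sqrt_iff)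
  also have "\<dots> \<longleftrightarrow> - a < z0 \<and> z0 < - c \<and> (1 - r) * z0\<^sup>2 = a * c"
  proof (cases "(1 - r) * z0\<^sup>2 = a * c")
    case True
    then have "0 < (1 - r) * z0\<^sup>2"
      using a c by simp
    then have "1 - r > 0"
      using assms(3) by (simp add: zero_less_mult_iff)
    have "r < 2 * E / a \<longleftrightarrow> c < (1 - r) * a"
      using a by (simp add: a_def c_def field_simps)
    also have "\<dots> \<longleftrightarrow> z0\<^sup>2 < a\<^sup>2"
      by (rule less_mult_iff_less_square[OF \<open>1 - r > 0\<close> a True])
    also have "\<dots> \<longleftrightarrow> - a < z0"
      using abs_less_square_iff[of z0 a] a assms(3) by auto
    finally have upper: "r < 2 * E / a \<longleftrightarrow> - a < z0" .
    have "- (2 * E) / c < r \<longleftrightarrow> (1 - r) * c < a"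
      using c by (simp add: a_def c_def field_simps)
    also have "\<dots> \<longleftrightarrow> c\<^sup>2 < z0\<^sup>2"
      using True by (intro mult_less_iff_square_less[OF \<open>1 - r > 0\<close> c]) (simp add: ac_simps)
    also have "\<dots> \<longleftrightarrow> z0 < - c"
      using abs_less_square_iff[of c z0] c assms(3) by auto
    finally show ?thesis
      using upper True by blast
  qed simp
  also have "\<dots> \<longleftrightarrow> (z0 + B)\<^sup>2 < E\<^sup>2 \<and> (r - 1) * z0\<^sup>2 = E\<^sup>2 - B\<^sup>2"
    using abs_less_square_iff[of "z0 + B" E] assms(1) by (auto simp: D a_def c_def algebra_simps)
  finally show ?thesis .
qed

lemma neg_branch_conds_iff:
  assumes "0 < E" and "z0 < 0"
  shows "neg_branch_conds E B r z0 \<longleftrightarrow> (z0 + B)\<^sup>2 < E\<^sup>2 \<and> (r - 1) * z0\<^sup>2 = E\<^sup>2 - B\<^sup>2"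
proof -
  have energy: "(z0 + B)\<^sup>2 < E\<^sup>2 \<longleftrightarrow> \<bar>z0 + B\<bar> < E"
    using abs_less_square_iff[of "z0 + B" E] assms(1) by simp
  consider "E > \<bar>B\<bar>" | "E < B" | "E = B" | "E \<le> - B"
    by linarith
  then show ?thesis
  proof cases
    case 1
    then show ?thesis
      using neg_branch_conds_iff_above assms(2) by blast
  next
    case 2
    then show ?thesis
      using neg_branch_conds_iff_below assms by blast
  next
    case 3
    then show ?thesis
      using assms unfolding energy by (auto simp: neg_branch_conds_def)
  next
    case 4
    then show ?thesis
      using assms unfolding energy by (auto simp: neg_branch_conds_def)
  qed
qed

lemma neg_branch_conds_reflect_iff:
  assumes "0 < E" and "z0 \<noteq> 0"
  shows "neg_branch_conds E B r z0 \<or> neg_branch_conds E (- B) r (- z0)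
    \<longleftrightarrow> (z0 + B)\<^sup>2 < E\<^sup>2 \<and> (r - 1) * z0\<^sup>2 = E\<^sup>2 - B\<^sup>2"
proof (cases "z0 < 0")
  case True
  then have "\<not> neg_branch_conds E (- B) r (- z0)"
    using neg_branch_conds_imp_neg[of E "- B" r "- z0"] by linarith
  then show ?thesis
    using neg_branch_conds_iff[OF assms(1) True] by blast
next
  case False
  then have "- z0 < 0" and "\<not> neg_branch_conds E B r z0"
    using assms(2) neg_branch_conds_imp_neg[of E B r z0] by auto
  moreover have "(- z0 + - B)\<^sup>2 = (z0 + B)\<^sup>2"
    by (simp add: power2_eq_square algebra_simps)
  ultimately show ?thesis
    using neg_branch_conds_iff[OF assms(1), of "- z0" "- B" r] by simp
qed

theorem lemma4p5:
  fixes A B z\<^sub>\<gamma> E z0 :: real and l :: int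
  assumes "A > 0" and "z\<^sub>\<gamma> \<noteq> 0" and "E > 0" and "l \<noteq> 0" and "z0 \<noteq> 0"
  defines "r \<equiv> z\<^sub>\<gamma> / (pi * A * real_of_int l)"
  defines "\<omega> \<equiv> 2 * pi * A * real_of_int l / z0"
  defines "conds \<equiv>
      (E > \<bar>B\<bar> \<and> 1 < 2 * E / (E + B) \<and> 2 * E / (E + B) < r \<and> z0 = - sqrt ((E\<^sup>2 - B\<^sup>2) / (r - 1)))
    \<or> (E > \<bar>B\<bar> \<and> 1 < 2 * E / (E - B) \<and> 2 * E / (E - B) < r \<and> z0 = sqrt ((E\<^sup>2 - B\<^sup>2) / (r - 1)))
    \<or> (0 < E \<and> E < B \<and> 2 * E / (E - \<bar>B\<bar>) < r \<and> r < 2 * E / (E + \<bar>B\<bar>) \<and> 2 * E / (E + \<bar>B\<bar>) < 1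
         \<and> z0 = - sqrt ((E\<^sup>2 - B\<^sup>2) / (r - 1)))
    \<or> (B < 0 \<and> 0 < E \<and> E < \<bar>B\<bar> \<and> 2 * E / (E - \<bar>B\<bar>) < r \<and> r < 2 * E / (E + \<bar>B\<bar>)
         \<and> 2 * E / (E + \<bar>B\<bar>) < 1 \<and> z0 = sqrt ((E\<^sup>2 - B\<^sup>2) / (r - 1)))
    \<or> (E = B \<and> real_of_int l = z\<^sub>\<gamma> / (pi * A) \<and> - 2 * B < z0 \<and> z0 < 0)
    \<or> (E = - B \<and> real_of_int l = z\<^sub>\<gamma> / (pi * A) \<and> 0 < z0 \<and> z0 < - 2 * B)"
  shows "((\<exists>u0 v0. spiraling u0 v0 z0 \<and> mag_energy A B u0 v0 z0 = E
              \<and> periodic_with (central_elt z\<^sub>\<gamma>) (mag_geod A B u0 v0 z0) \<omega>)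
          \<longleftrightarrow> conds)
       \<and> (conds \<longrightarrow> (\<forall>u0 v0. u0\<^sup>2 + v0\<^sup>2 = A * (E\<^sup>2 - (z0 + B)\<^sup>2) \<longrightarrow>
              spiraling u0 v0 z0 \<and> mag_energy A B u0 v0 z0 = E
              \<and> periodic_with (central_elt z\<^sub>\<gamma>) (mag_geod A B u0 v0 z0) \<omega>))"
proof -
  let ?P = "(z0 + B)\<^sup>2 < E\<^sup>2 \<and> (r - 1) * z0\<^sup>2 = E\<^sup>2 - B\<^sup>2"
  have "real_of_int l = z\<^sub>\<gamma> / (pi * A) \<longleftrightarrow> r = 1"
    unfolding r_def using assms(1,4) by (auto simp: field_simps)
  moreover have "E < - B \<longleftrightarrow> B < 0 \<and> E < \<bar>B\<bar>" and "2 * B < - z0 \<longleftrightarrow> z0 < - (2 * B)"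
    using assms(3) by auto
  ultimately have "conds \<longleftrightarrow> neg_branch_conds E B r z0 \<or> neg_branch_conds E (- B) r (- z0)"
    unfolding conds_def neg_branch_conds_def using assms(3) by (simp add: disj_ac conj_ac)
  then have conds: "conds \<longleftrightarrow> ?P"
    using neg_branch_conds_reflect_iff[OF assms(3,5)] by blast
  have geodesic: "spiraling u0 v0 z0 \<and> mag_energy A B u0 v0 z0 = E
      \<and> periodic_with (central_elt z\<^sub>\<gamma>) (mag_geod A B u0 v0 z0) \<omega>
    \<longleftrightarrow> u0\<^sup>2 + v0\<^sup>2 = A * (E\<^sup>2 - (z0 + B)\<^sup>2) \<and> ?P" for u0 v0
    unfolding \<omega>_def r_def using assms(1,3,4,5) by (intro spiraling_periodic_mag_geod_iff) auto
  have "(sqrt (A * (E\<^sup>2 - (z0 + B)\<^sup>2)))\<^sup>2 + 0\<^sup>2 = A * (E\<^sup>2 - (z0 + B)\<^sup>2)" if ?P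
    using that assms(1) by simp
  then show ?thesis
    unfolding conds geodesic by blast
qed

end
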